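(* Let $l_2$ be an even positive integer and $l_3$ an odd integer with $l_3>1$, and let $G=\Theta(1,l_2,l_3)$. Then $G$ is enumeratively chromatic-choosable.
   Context: For positive integers $l_1,l_2,l_3$, the theta graph $\Theta(l_1,l_2,l_3)$ consists of two end vertices joined by three internally disjoint paths of lengths (numbers of edges) $l_1,l_2,l_3$. An $m$-assignment $L$ for a graph $G$ assigns to each vertex $v$ a set $L(v)$ of $m$ colors; $P(G,L)$ is the number of proper colorings $f$ of $G$ with $f(v)\in L(v)$ for all $v$. $P(G,m)$ is the chromatic polynomial, and the list color function $P_\ell(G,m)$ is the minimum of $P(G,L)$ over all $m$-assignments $L$. $G$ is enumeratively chromatic-choosable if $P_\ell(G,m)=P(G,m)$ for all $m\in\mathbb{N}$. *)

theory Defs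
  imports Main
begin

text \<open>Simple graphs are given by a vertex set V and an edge set E of 2-element sets.
Colours are natural numbers.\<close>

definition proper_list_colorings ::
  "'v set \<Rightarrow> 'v set set \<Rightarrow> ('v \<Rightarrow> nat set) \<Rightarrow> ('v \<Rightarrow> nat) set" where
  "proper_list_colorings V E L =
     {f. (\<forall>v\<in>V. f v \<in> L v) \<and> (\<forall>v. v \<notin> V \<longrightarrow> f v = undefined)
         \<and> (\<forall>u w. {u, w} \<in> E \<longrightarrow> f u \<noteq> f w)}"

definition num_list_colorings :: "'v set \<Rightarrow> 'v set set \<Rightarrow> ('v \<Rightarrow> nat set) \<Rightarrow> nat" where
  "num_list_colorings V E L = card (proper_list_colorings V E L)"

definition chrom_poly :: "'v set \<Rightarrow> 'v set set \<Rightarrow> nat \<Rightarrow> nat" where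
  "chrom_poly V E m = num_list_colorings V E (\<lambda>_. {0..<m})"

definition m_assignment :: "'v set \<Rightarrow> nat \<Rightarrow> ('v \<Rightarrow> nat set) \<Rightarrow> bool" where
  "m_assignment V m L \<longleftrightarrow> (\<forall>v\<in>V. finite (L v) \<and> card (L v) = m)"

definition list_color_fun :: "'v set \<Rightarrow> 'v set set \<Rightarrow> nat \<Rightarrow> nat" where
  "list_color_fun V E m = Inf {num_list_colorings V E L | L. m_assignment V m L}"

definition enum_chrom_choosable :: "'v set \<Rightarrow> 'v set set \<Rightarrow> bool" where
  "enum_chrom_choosable V E \<longleftrightarrow> (\<forall>m. list_color_fun V E m = chrom_poly V E m)"

text \<open>Theta graph. End vertices are (0,0) and (0,1); the j-th internal vertex
(0 < j < l_i) of path i (i = 1,2,3) is (i,j).\<close>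
definition theta_pt :: "nat \<Rightarrow> nat \<Rightarrow> nat \<Rightarrow> nat \<times> nat" where
  "theta_pt l i j = (if j = 0 then (0, 0) else if j = l then (0, 1) else (i, j))"

definition theta_len :: "nat \<Rightarrow> nat \<Rightarrow> nat \<Rightarrow> nat \<Rightarrow> nat" where
  "theta_len l1 l2 l3 i = (if i = 1 then l1 else if i = 2 then l2 else l3)"

definition theta_V :: "nat \<Rightarrow> nat \<Rightarrow> nat \<Rightarrow> (nat \<times> nat) set" where
  "theta_V l1 l2 l3 = (\<Union>i\<in>{1,2,3}. theta_pt (theta_len l1 l2 l3 i) i ` {0..theta_len l1 l2 l3 i})"

definition theta_E :: "nat \<Rightarrow> nat \<Rightarrow> nat \<Rightarrow> (nat \<times> nat) set set" where
  "theta_E l1 l2 l3 = (\<Union>i\<in>{1,2,3}.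
     (\<lambda>j. {theta_pt (theta_len l1 l2 l3 i) i j, theta_pt (theta_len l1 l2 l3 i) i (Suc j)})
       ` {0..<theta_len l1 l2 l3 i})"

end

theory Submission
  imports Defs
begin

text \<open>
  Write u = (0, 0) and w = (0, 1) for the end vertices. The theta graph Theta(1, l2, l3) is the
  cycle C of length l3 + 1 formed by the edge uw and the path of length l3, together with a path P
  of length l2 from u to w. So a list colouring is a colouring of C followed by a colouring of P
  with prescribed, distinct end colours. With all lists equal to {0..<m}, P has D such colourings,
  where D is the number of walks of length l2 between two distinct vertices of the complete graph
  K_m; since l2 is even, prescribing equal end colours gives D + 1 colourings. If m \<le> 2 then D = 0.
  If m \<ge> 3 it suffices to show that for an m-assignment every admissible prescription of end
  colours leaves at least D colourings of P, and that the even cycle C has at least as many list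
  colourings as colourings from {0..<m}.

  Both comparisons use a coherent labelling of the lists by {0..<m}: a colour keeps its label from
  one vertex to the next whenever it is available at both. Relabelling maps colourings from
  {0..<m} injectively to list colourings. Going once around the cycle permutes the labels of the
  colours available at both ends of the path (the monodromy of the labelling). For every label j
  moved by the monodromy, closing the cycle loses at most one colouring; this is compensated by a
  list colouring whose sequence of labels repeats j exactly once, at a vertex after which the colour
  with label j is not available.
\<close>

section \<open>Colourings of paths and cycles\<close>

definition path_colorings :: "'a set list \<Rightarrow> 'a list set" where
  "path_colorings K = {zs. list_all2 (\<in>) zs K \<and> distinct_adj zs}"

definition count_path_colorings :: "'a set list \<Rightarrow> 'a \<Rightarrow> 'a \<Rightarrow> nat" where
  "count_path_colorings K a b = card {zs \<in> path_colorings K. hd zs = a \<and> last zs = b}"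

text \<open>A cycle is given by the lists of its vertices in cyclic order, read as a path whose last
  vertex is also adjacent to the first.\<close>

definition cycle_colorings :: "'a set list \<Rightarrow> 'a list set" where
  "cycle_colorings K = {zs \<in> path_colorings K. hd zs \<noteq> last zs}"

lemma length_path_colorings: "zs \<in> path_colorings K \<Longrightarrow> length zs = length K"
  unfolding path_colorings_def by (auto dest: list_all2_lengthD)

lemma path_colorings_iff_nth:
  "zs \<in> path_colorings K \<longleftrightarrow>
     length zs = length K \<and> (\<forall>i<length K. zs ! i \<in> K ! i) \<and> distinct_adj zs"
  unfolding path_colorings_def list_all2_conv_all_nth by auto

lemma path_colorings_replicate_iff:
  "\<psi> \<in> path_colorings (replicate k A) \<longleftrightarrow> length \<psi> = k \<and> set \<psi> \<subseteq> A \<and> distinct_adj \<psi>"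
  unfolding path_colorings_iff_nth subset_code(1) all_set_conv_all_nth by auto

lemma hd_last_in_path_colorings:
  assumes "zs \<in> path_colorings K" "K \<noteq> []"
  shows "hd zs \<in> hd K" "last zs \<in> last K"
proof -
  have "length zs = length K" "zs \<noteq> []"
    using assms by (auto simp: path_colorings_iff_nth)
  then show "hd zs \<in> hd K" "last zs \<in> last K"
    using assms by (auto simp: path_colorings_iff_nth hd_conv_nth last_conv_nth)
qed

lemma finite_path_colorings:
  assumes "\<forall>X\<in>set K. finite X"
  shows "finite (path_colorings K)"
proof (rule finite_subset)
  show "path_colorings K \<subseteq> {zs. set zs \<subseteq> \<Union>(set K) \<and> length zs = length K}"
    by (auto simp: path_colorings_iff_nth in_set_conv_nth) (meson nth_mem)
  show "finite {zs. set zs \<subseteq> \<Union>(set K) \<and> length zs = length K}"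
    using assms by (intro finite_lists_length_eq) auto
qed

lemma path_colorings_Cons:
  assumes "K \<noteq> []"
  shows "zs \<in> path_colorings (A # K) \<longleftrightarrow>
           (\<exists>c ys. zs = c # ys \<and> c \<in> A \<and> ys \<in> path_colorings K \<and> c \<noteq> hd ys)"
proof -
  have "ys \<noteq> []" if "list_all2 (\<in>) ys K" for ys
    using that assms by auto
  then show ?thesis
    unfolding path_colorings_def by (auto simp: list_all2_Cons2 distinct_adj_Cons)
qed

lemma count_path_colorings_Cons:
  assumes "K \<noteq> []" and "\<forall>X\<in>set K. finite X"
  shows "count_path_colorings (A # K) a b =
           (if a \<in> A then \<Sum>c\<in>hd K - {a}. count_path_colorings K c b else 0)"
proof -
  let ?C = "\<lambda>K a. {zs \<in> path_colorings K. hd zs = a \<and> last zs = b}"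
  have hd_in: "hd ys \<in> hd K" and nonempty: "ys \<noteq> []" if "ys \<in> path_colorings K" for ys
    using that assms(1) hd_last_in_path_colorings(1) length_path_colorings by fastforce+
  have "?C (A # K) a = (if a \<in> A then (#) a ` (\<Union>c\<in>hd K - {a}. ?C K c) else {})"
    using assms(1) hd_in nonempty by (auto simp: path_colorings_Cons)
  moreover have "card ((#) a ` (\<Union>c\<in>hd K - {a}. ?C K c)) = (\<Sum>c\<in>hd K - {a}. card (?C K c))"
    using assms by (subst card_image) (auto intro!: card_UN_disjoint finite_path_colorings)
  ultimately show ?thesis
    unfolding count_path_colorings_def by simp
qed

lemma count_path_colorings_singleton:
  "count_path_colorings [A] a b = (if a = b \<and> a \<in> A then 1 else 0)"
proof -
  have "{zs \<in> path_colorings [A]. hd zs = a \<and> last zs = b} = (if a = b \<and> a \<in> A then {[a]} else {})"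
    by (auto simp: path_colorings_def list_all2_Cons2)
  then show ?thesis
    unfolding count_path_colorings_def by auto
qed

lemma card_path_colorings_eq:
  assumes "K \<noteq> []" and "\<forall>X\<in>set K. finite X"
  shows "card (path_colorings K) = card (cycle_colorings K) + (\<Sum>c\<in>hd K. count_path_colorings K c c)"
proof -
  define U where "U = (\<Union>c\<in>hd K. {zs \<in> path_colorings K. hd zs = c \<and> last zs = c})"
  have fin: "finite (path_colorings K)"
    using assms(2) by (rule finite_path_colorings)
  have "card (path_colorings K) = card (cycle_colorings K \<union> U)"
    unfolding U_def using hd_last_in_path_colorings(1)[OF _ assms(1)]
    by (intro arg_cong[where f = card]) (auto simp: cycle_colorings_def, metis)
  also have "\<dots> = card (cycle_colorings K) + card U"
    using fin
    by (intro card_Un_disjoint) (auto simp: cycle_colorings_def U_def intro: finite_subset)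
  also have "card U = (\<Sum>c\<in>hd K. count_path_colorings K c c)"
    unfolding U_def count_path_colorings_def
    using assms fin by (intro card_UN_disjoint) auto
  finally show ?thesis .
qed

text \<open>Walks of length e in the complete graph K_m from a vertex to itself, respectively to another
  fixed vertex.\<close>

fun walks_same :: "nat \<Rightarrow> nat \<Rightarrow> nat" and walks_distinct :: "nat \<Rightarrow> nat \<Rightarrow> nat" where
  "walks_same m 0 = 1"
| "walks_same m (Suc e) = (m - 1) * walks_distinct m e"
| "walks_distinct m 0 = 0"
| "walks_distinct m (Suc e) = walks_same m e + (m - 2) * walks_distinct m e"

lemma sum_remove_if_eq:
  fixes x y :: nat
  assumes "i < m" "j < m"
  shows "(\<Sum>c\<in>{0..<m} - {i}. if c = j then x else y) =
           (if i = j then (m - 1) * y else x + (m - 2) * y)"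
proof (cases "i = j")
  case True
  then have "(\<Sum>c\<in>{0..<m} - {i}. if c = j then x else y) = (\<Sum>c\<in>{0..<m} - {i}. y)"
    by (intro sum.cong) auto
  then show ?thesis
    using True assms by simp
next
  case False
  have "j \<in> {0..<m} - {i}"
    using assms False by auto
  then have "(\<Sum>c\<in>{0..<m} - {i}. if c = j then x else y) = x + (\<Sum>c\<in>{0..<m} - {i} - {j}. y)"
    by (subst sum.remove) (auto intro!: sum.cong)
  moreover have "card ({0..<m} - {i} - {j}) = m - 2"
    using assms False by (simp add: card_Diff_subset)
  ultimately show ?thesis
    using False by simp
qed

lemma count_path_colorings_replicate:
  assumes "i < m" "j < m"
  shows "count_path_colorings (replicate (Suc e) {0..<m}) i j =
           (if i = j then walks_same m e else walks_distinct m e)"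
  using assms(1)
proof (induction e arbitrary: i)
  case 0
  then show ?case
    by (simp add: count_path_colorings_singleton assms(2))
next
  case (Suc e)
  have "count_path_colorings (replicate (Suc (Suc e)) {0..<m}) i j =
          (\<Sum>c\<in>{0..<m} - {i}. count_path_colorings (replicate (Suc e) {0..<m}) c j)"
    using count_path_colorings_Cons[of "replicate (Suc e) {0..<m}" "{0..<m}" i j] Suc.prems by simp
  also have "\<dots> = (\<Sum>c\<in>{0..<m} - {i}. if c = j then walks_same m e else walks_distinct m e)"
    using Suc.IH by (intro sum.cong) auto
  also have "\<dots> = (if i = j then walks_same m (Suc e) else walks_distinct m (Suc e))"
    using sum_remove_if_eq[OF Suc.prems assms(2)] by simp
  finally show ?case .
qed

lemma walks_same_minus_walks_distinct:
  assumes "2 \<le> m"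
  shows "int (walks_same m e) - int (walks_distinct m e) = (-1) ^ e"
proof -
  obtain q where "m = q + 2"
    using assms by (metis add.commute le_Suc_ex)
  then show ?thesis
    by (induction e) (auto simp: algebra_simps)
qed

lemma walks_distinct_even_eq_0:
  assumes "m \<le> 2" and "even e"
  shows "walks_distinct m e = 0"
proof -
  obtain q where "e = 2 * q"
    using assms(2) by blast
  moreover have "walks_distinct m (2 * q) = 0"
    using assms(1) by (induction q) auto
  ultimately show ?thesis
    by simp
qed

section \<open>Coherent labellings\<close>

lemma bij_betw_extend:
  assumes s: "bij_betw s I A" and "finite A" "finite B" "card B = card A"
  shows "\<exists>\<tau>. bij_betw \<tau> I B \<and> (\<forall>i\<in>I. s i \<in> B \<longrightarrow> \<tau> i = s i)"
proof -
  define I\<^sub>B where "I\<^sub>B = {i \<in> I. s i \<in> B}"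
  have s_I\<^sub>B: "bij_betw s I\<^sub>B (A \<inter> B)"
    using s unfolding I\<^sub>B_def bij_betw_def inj_on_def by auto
  have "card (I - I\<^sub>B) = card (B - A)"
  proof -
    have "card (I - I\<^sub>B) = card A - card (A \<inter> B)"
      using s s_I\<^sub>B \<open>finite A\<close> by (simp add: card_Diff_subset I\<^sub>B_def bij_betw_same_card
          bij_betw_finite)
    also have "\<dots> = card (B - A)"
      using assms(3,4) by (metis Int_commute card_Diff_subset_Int finite_Int)
    finally show ?thesis .
  qed
  then obtain g where g: "bij_betw g (I - I\<^sub>B) (B - A)"
    using \<open>finite B\<close> s \<open>finite A\<close> by (metis bij_betw_finite finite_Diff finite_same_card_bij)
  have "bij_betw (\<lambda>i. if i \<in> I\<^sub>B then s i else g i) (I\<^sub>B \<union> (I - I\<^sub>B)) ((A \<inter> B) \<union> (B - A))"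
    by (rule bij_betw_disjoint_Un[OF s_I\<^sub>B g]) auto
  moreover have "I\<^sub>B \<union> (I - I\<^sub>B) = I" and "(A \<inter> B) \<union> (B - A) = B"
    by (auto simp: I\<^sub>B_def)
  ultimately show ?thesis
    by (intro exI[of _ "\<lambda>i. if i \<in> I\<^sub>B then s i else g i"]) (auto simp: I\<^sub>B_def)
qed

locale coherent_labelling =
  fixes K :: "'a set list" and m :: nat and \<sigma> :: "nat \<Rightarrow> nat \<Rightarrow> 'a"
  assumes bij_betw_label: "t < length K \<Longrightarrow> bij_betw (\<sigma> t) {0..<m} (K ! t)"
    and label_Suc: "Suc t < length K \<Longrightarrow> i < m \<Longrightarrow> \<sigma> t i \<in> K ! Suc t \<Longrightarrow> \<sigma> (Suc t) i = \<sigma> t i"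

lemma coherent_labelling_exists:
  assumes "\<forall>X\<in>set K. finite X \<and> card X = m"
  shows "\<exists>\<sigma>. coherent_labelling K m \<sigma>"
  using assms
proof (induction K rule: rev_induct)
  case Nil
  show ?case
    by (simp add: coherent_labelling_def)
next
  case (snoc B K)
  then obtain \<sigma> where \<sigma>: "coherent_labelling K m \<sigma>"
    by auto
  have B: "finite B" "card B = m"
    using snoc.prems by auto
  show ?case
  proof (cases "K = []")
    case True
    obtain h where "bij_betw h {0..<m} B"
      using B ex_bij_betw_nat_finite by blast
    then have "coherent_labelling (K @ [B]) m (\<lambda>_. h)"
      using True by (simp add: coherent_labelling_def)
    then show ?thesis by blast
  next
    case False
    define t where "t = length K - 1"
    have t: "length K = Suc t"
      using False by (simp add: t_def)
    have bij: "bij_betw (\<sigma> t) {0..<m} (K ! t)"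
      using \<sigma> t by (simp add: coherent_labelling_def)
    then have "finite (K ! t)" "card (K ! t) = m"
      by (auto simp flip: bij_betw_same_card dest: bij_betw_finite)
    then obtain \<tau> where \<tau>: "bij_betw \<tau> {0..<m} B" "\<forall>i\<in>{0..<m}. \<sigma> t i \<in> B \<longrightarrow> \<tau> i = \<sigma> t i"
      using bij_betw_extend[OF bij] B by auto
    have "coherent_labelling (K @ [B]) m (\<sigma>(length K := \<tau>))"
      using \<sigma> \<tau> t unfolding coherent_labelling_def
      by (auto simp: nth_append less_Suc_eq)
    then show ?thesis by blast
  qed
qed

definition relabel :: "(nat \<Rightarrow> nat \<Rightarrow> 'a) \<Rightarrow> nat list \<Rightarrow> 'a list" where
  "relabel \<sigma> \<psi> = map (\<lambda>t. \<sigma> t (\<psi> ! t)) [0..<length \<psi>]"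

lemma length_relabel [simp]: "length (relabel \<sigma> \<psi>) = length \<psi>"
  by (simp add: relabel_def)

lemma nth_relabel [simp]: "t < length \<psi> \<Longrightarrow> relabel \<sigma> \<psi> ! t = \<sigma> t (\<psi> ! t)"
  by (simp add: relabel_def)

lemma relabel_eq_Nil_iff [simp]: "relabel \<sigma> \<psi> = [] \<longleftrightarrow> \<psi> = []"
  by (simp add: relabel_def)

lemma hd_relabel: "\<psi> \<noteq> [] \<Longrightarrow> hd (relabel \<sigma> \<psi>) = \<sigma> 0 (hd \<psi>)"
  by (simp add: hd_conv_nth)

lemma last_relabel: "\<psi> \<noteq> [] \<Longrightarrow> last (relabel \<sigma> \<psi>) = \<sigma> (length \<psi> - 1) (last \<psi>)"
  by (simp add: last_conv_nth)

context coherent_labelling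
begin

definition label_lists :: "nat list set" where
  "label_lists = {\<psi>. length \<psi> = length K \<and> set \<psi> \<subseteq> {0..<m}}"

lemma label_lists_nth:
  assumes "\<psi> \<in> label_lists" "t < length K"
  shows "\<psi> ! t < m"
proof -
  have "\<psi> ! t \<in> set \<psi>"
    using assms by (simp add: label_lists_def)
  then show ?thesis
    using assms(1) by (auto simp: label_lists_def)
qed

lemma label_in: "t < length K \<Longrightarrow> i < m \<Longrightarrow> \<sigma> t i \<in> K ! t"
  using bij_betw_label[of t] by (auto simp: bij_betw_def)

lemma label_eq_iff: "t < length K \<Longrightarrow> i < m \<Longrightarrow> i' < m \<Longrightarrow> \<sigma> t i = \<sigma> t i' \<longleftrightarrow> i = i'"
  using bij_betw_label by (auto simp: bij_betw_def inj_on_def)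

lemma ex_label:
  assumes "t < length K" "a \<in> K ! t"
  shows "\<exists>i<m. \<sigma> t i = a"
proof -
  have "a \<in> \<sigma> t ` {0..<m}"
    using assms bij_betw_label by (simp add: bij_betw_def)
  then show ?thesis
    by auto
qed

lemma label_eq_label_Suc_iff:
  assumes "Suc t < length K" "i < m" "i' < m"
  shows "\<sigma> t i = \<sigma> (Suc t) i' \<longleftrightarrow> i = i' \<and> \<sigma> t i \<in> K ! Suc t"
proof
  assume eq: "\<sigma> t i = \<sigma> (Suc t) i'"
  then have "\<sigma> t i \<in> K ! Suc t"
    using label_in assms by simp
  moreover from this have "\<sigma> (Suc t) i = \<sigma> t i"
    using label_Suc assms by blast
  ultimately show "i = i' \<and> \<sigma> t i \<in> K ! Suc t"
    using eq label_eq_iff assms by simp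
qed (use label_Suc assms in auto)

lemma relabel_in_path_colorings:
  assumes "\<psi> \<in> label_lists"
    and "\<forall>t. Suc t < length K \<longrightarrow> \<psi> ! t = \<psi> ! Suc t \<longrightarrow> \<sigma> t (\<psi> ! t) \<notin> K ! Suc t"
  shows "relabel \<sigma> \<psi> \<in> path_colorings K"
proof -
  have len: "length \<psi> = length K"
    using assms(1) by (simp add: label_lists_def)
  have "relabel \<sigma> \<psi> ! t \<noteq> relabel \<sigma> \<psi> ! Suc t" if "Suc t < length K" for t
  proof -
    have "\<psi> ! t < m" "\<psi> ! Suc t < m"
      using label_lists_nth assms(1) that by auto
    then show ?thesis
      using assms(2) that len label_eq_label_Suc_iff by auto
  qed
  moreover have "relabel \<sigma> \<psi> ! t \<in> K ! t" if "t < length K" for t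
    using label_in label_lists_nth assms(1) that len by simp
  ultimately show ?thesis
    using len by (simp add: path_colorings_iff_nth distinct_adj_conv_nth)
qed

lemma inj_on_relabel: "inj_on (relabel \<sigma>) label_lists"
proof (rule inj_onI)
  fix \<psi> \<psi>' assume \<psi>: "\<psi> \<in> label_lists" and \<psi>': "\<psi>' \<in> label_lists"
    and eq: "relabel \<sigma> \<psi> = relabel \<sigma> \<psi>'"
  have len: "length \<psi> = length K" "length \<psi>' = length K"
    using \<psi> \<psi>' by (simp_all add: label_lists_def)
  show "\<psi> = \<psi>'"
  proof (rule nth_equalityI)
    fix t assume "t < length \<psi>"
    then have "\<sigma> t (\<psi> ! t) = \<sigma> t (\<psi>' ! t)"
      using arg_cong[OF eq, of "\<lambda>zs. zs ! t"] len by simp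
    then show "\<psi> ! t = \<psi>' ! t"
      using label_eq_iff label_lists_nth \<psi> \<psi>' \<open>t < length \<psi>\<close> len by simp
  qed (use len in simp)
qed

lemma finite_label_sets: "\<forall>X\<in>set K. finite X"
  using bij_betw_label bij_betw_finite by (fastforce simp: in_set_conv_nth)

lemma count_path_colorings_replicate_le:
  assumes "K \<noteq> []" "i < m" "j < m"
  shows "count_path_colorings (replicate (length K) {0..<m}) i j
           \<le> count_path_colorings K (\<sigma> 0 i) (\<sigma> (length K - 1) j)"
proof -
  let ?A = "{\<psi> \<in> path_colorings (replicate (length K) {0..<m}). hd \<psi> = i \<and> last \<psi> = j}"
  let ?B = "{zs \<in> path_colorings K. hd zs = \<sigma> 0 i \<and> last zs = \<sigma> (length K - 1) j}"
  have A: "?A \<subseteq> label_lists"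
    by (auto simp: path_colorings_replicate_iff label_lists_def)
  have "relabel \<sigma> ` ?A \<subseteq> ?B"
  proof
    fix zs assume "zs \<in> relabel \<sigma> ` ?A"
    then obtain \<psi> where \<psi>: "\<psi> \<in> ?A" and zs: "zs = relabel \<sigma> \<psi>"
      by blast
    have "distinct_adj \<psi>" "length \<psi> = length K"
      using \<psi> by (auto simp: path_colorings_replicate_iff)
    then have "zs \<in> path_colorings K"
      using zs \<psi> A relabel_in_path_colorings by (auto simp: distinct_adj_conv_nth)
    moreover have "\<psi> \<noteq> []"
      using \<open>length \<psi> = length K\<close> assms(1) by auto
    ultimately show "zs \<in> ?B"
      using zs \<psi> \<open>length \<psi> = length K\<close> by (auto simp: hd_relabel last_relabel)
  qed
  moreover have "inj_on (relabel \<sigma>) ?A"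
    using inj_on_relabel A by (rule inj_on_subset)
  moreover have "finite ?B"
    using finite_path_colorings[OF finite_label_sets] by simp
  ultimately show ?thesis
    unfolding count_path_colorings_def by (meson card_inj_on_le)
qed

end

lemma walks_distinct_le_count_path_colorings:
  assumes K: "\<forall>X\<in>set K. finite X \<and> card X = m" and "length K = Suc e" "even e" "2 \<le> m"
    and "a \<in> hd K" "b \<in> last K"
  shows "walks_distinct m e \<le> count_path_colorings K a b"
proof -
  obtain \<sigma> where \<sigma>: "coherent_labelling K m \<sigma>"
    using coherent_labelling_exists K by blast
  have "K \<noteq> []"
    using assms(2) by auto
  then have "a \<in> K ! 0" "b \<in> K ! e"
    using assms by (simp_all add: hd_conv_nth last_conv_nth)
  then obtain i j where ij: "i < m" "\<sigma> 0 i = a" "j < m" "\<sigma> e j = b"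
    using coherent_labelling.ex_label[OF \<sigma>] assms(2) by (metis lessI zero_less_Suc)
  have "walks_distinct m e \<le> walks_same m e"
    using walks_same_minus_walks_distinct[OF assms(4), of e] assms(3) by simp
  then have "walks_distinct m e \<le> count_path_colorings (replicate (Suc e) {0..<m}) i j"
    using count_path_colorings_replicate[OF ij(1,3)] by simp
  also have "\<dots> \<le> count_path_colorings K a b"
    using coherent_labelling.count_path_colorings_replicate_le[OF \<sigma> \<open>K \<noteq> []\<close> ij(1,3)] ij assms(2)
    by simp
  finally show ?thesis .
qed

section \<open>Even cycles\<close>

lemma ex_avoiding_two:
  fixes m :: nat
  assumes "3 \<le> m" and "inj_on s {0..<m}"
  shows "\<exists>q<m. q \<noteq> x \<and> s q \<noteq> y"
proof (rule ccontr)
  assume "\<not> ?thesis"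
  then have "{0..<m} \<subseteq> {x, inv_into {0..<m} s y}"
    using assms(2) by (auto simp: inv_into_f_f)
  then have "card {0..<m} \<le> card {x, inv_into {0..<m} s y}"
    by (rule card_mono[rotated]) simp
  also have "\<dots> \<le> 2"
    by (simp add: card_insert_if)
  finally show False
    using assms(1) by simp
qed

lemma ex_list_one_repetition:
  fixes j :: nat
  assumes "2 \<le> m" "j < m" "Suc t < k"
  shows "\<exists>\<psi>. length \<psi> = k \<and> set \<psi> \<subseteq> {0..<m} \<and> \<psi> ! t = j \<and> \<psi> ! Suc t = j \<and>
             (\<forall>i. Suc i < k \<longrightarrow> i \<noteq> t \<longrightarrow> \<psi> ! i \<noteq> \<psi> ! Suc i)"
proof -
  define p where "p = (if j = 0 then 1 else 0 :: nat)"
  define d where "d i = (if i \<le> t then t - i else i - Suc t)" for i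
  define \<psi> where "\<psi> = map (\<lambda>i. if even (d i) then j else p) [0..<k]"
  have "p \<noteq> j" "p < m"
    using assms(1) by (auto simp: p_def)
  moreover have "odd (d i) \<longleftrightarrow> even (d (Suc i))" if "i \<noteq> t" for i
    using that by (cases "i < t") (auto simp: d_def Suc_diff_Suc le_Suc_eq)
  ultimately show ?thesis
    using assms by (intro exI[of _ \<psi>]) (auto simp: \<psi>_def d_def)
qed

lemma ex_list_one_repetition_ends:
  fixes j :: nat
  assumes "3 \<le> m" "3 \<le> k" "j < m" "Suc t < k"
    and "inj_on s\<^sub>0 {0..<m}" "inj_on s\<^sub>1 {0..<m}"
  shows "\<exists>\<psi>. length \<psi> = k \<and> set \<psi> \<subseteq> {0..<m} \<and> \<psi> ! t = j \<and> \<psi> ! Suc t = j \<and>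
             (\<forall>i. Suc i < k \<longrightarrow> i \<noteq> t \<longrightarrow> \<psi> ! i \<noteq> \<psi> ! Suc i) \<and> s\<^sub>0 (hd \<psi>) \<noteq> s\<^sub>1 (last \<psi>)"
proof -
  obtain \<phi> where \<phi>: "length \<phi> = k" "set \<phi> \<subseteq> {0..<m}" "\<phi> ! t = j" "\<phi> ! Suc t = j"
    "\<forall>i. Suc i < k \<longrightarrow> i \<noteq> t \<longrightarrow> \<phi> ! i \<noteq> \<phi> ! Suc i"
    using ex_list_one_repetition[of m j t k] assms(1,3,4) by auto
  have "\<phi> \<noteq> []"
    using \<phi>(1) assms(2) by auto
  show ?thesis
  proof (cases "t = 0")
    case False
    obtain q where q: "q < m" "q \<noteq> \<phi> ! 1" "s\<^sub>0 q \<noteq> s\<^sub>1 (last \<phi>)"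
      using ex_avoiding_two[OF assms(1,5)] by blast
    have "last (\<phi>[0 := q]) = last \<phi>"
      using \<phi>(1) assms(2) \<open>\<phi> \<noteq> []\<close> by (simp add: last_conv_nth nth_list_update)
    then show ?thesis
      using \<phi> q False \<open>\<phi> \<noteq> []\<close> set_update_subset_insert[of \<phi> 0 q]
      by (intro exI[of _ "\<phi>[0 := q]"]) (auto simp: nth_list_update hd_conv_nth)
  next
    case True
    obtain q where q: "q < m" "q \<noteq> \<phi> ! (k - 2)" "s\<^sub>1 q \<noteq> s\<^sub>0 (hd \<phi>)"
      using ex_avoiding_two[OF assms(1,6)] by blast
    have "hd (\<phi>[k - 1 := q]) = hd \<phi>"
      using \<phi>(1) assms(2) \<open>\<phi> \<noteq> []\<close> by (simp add: hd_conv_nth nth_list_update)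
    moreover have "\<phi>[k - 1 := q] ! i \<noteq> \<phi>[k - 1 := q] ! Suc i" if "Suc i < k" "i \<noteq> t" for i
    proof (cases "Suc i = k - 1")
      case True
      then have "i = k - 2"
        by simp
      then show ?thesis
        using \<phi> q that True by (auto simp: nth_list_update)
    qed (use \<phi> that in \<open>auto simp: nth_list_update\<close>)
    ultimately show ?thesis
      using \<phi> q True assms(2,4) \<open>\<phi> \<noteq> []\<close> set_update_subset_insert[of \<phi> "k - 1" q]
      by (intro exI[of _ "\<phi>[k - 1 := q]"]) (auto simp: nth_list_update last_conv_nth)
  qed
qed

context coherent_labelling
begin

definition closing_labels :: "nat set" where
  "closing_labels = {j. j < m \<and> \<sigma> (length K - 1) j \<in> K ! 0}"

definition monodromy :: "nat \<Rightarrow> nat" where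
  "monodromy j = inv_into {0..<m} (\<sigma> 0) (\<sigma> (length K - 1) j)"

definition moved_labels :: "nat set" where
  "moved_labels = {j \<in> closing_labels. monodromy j \<noteq> j}"

lemma monodromy:
  assumes "K \<noteq> []" "j \<in> closing_labels"
  shows "monodromy j < m" and "\<sigma> 0 (monodromy j) = \<sigma> (length K - 1) j"
proof -
  have image: "\<sigma> (length K - 1) j \<in> \<sigma> 0 ` {0..<m}"
    using assms bij_betw_label[of 0] by (auto simp: closing_labels_def bij_betw_def)
  show "monodromy j < m" "\<sigma> 0 (monodromy j) = \<sigma> (length K - 1) j"
    using inv_into_into[OF image] f_inv_into_f[OF image] by (auto simp: monodromy_def)
qed

lemma monodromy_unique:
  assumes "K \<noteq> []" "i < m" "j \<in> closing_labels" "\<sigma> 0 i = \<sigma> (length K - 1) j"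
  shows "monodromy j = i"
proof -
  have "\<sigma> 0 (monodromy j) = \<sigma> 0 i"
    using monodromy(2)[OF assms(1,3)] assms(4) by simp
  then show ?thesis
    using label_eq_iff[of 0 "monodromy j" i] monodromy(1)[OF assms(1,3)] assms(1,2) by simp
qed

lemma card_path_colorings_closing:
  assumes "K \<noteq> []"
  shows "card {\<psi> \<in> path_colorings (replicate (length K) {0..<m}).
                \<sigma> 0 (hd \<psi>) = \<sigma> (length K - 1) (last \<psi>)} =
           (\<Sum>j\<in>closing_labels. count_path_colorings (replicate (length K) {0..<m}) (monodromy j) j)"
proof -
  let ?P = "path_colorings (replicate (length K) {0..<m})"
  have ends: "hd \<psi> < m" "last \<psi> < m" if "\<psi> \<in> ?P" for \<psi>
    using hd_last_in_path_colorings[OF that] assms by simp_all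
  have "{\<psi> \<in> ?P. \<sigma> 0 (hd \<psi>) = \<sigma> (length K - 1) (last \<psi>)}
      = (\<Union>j\<in>closing_labels. {\<psi> \<in> ?P. hd \<psi> = monodromy j \<and> last \<psi> = j})"
  proof (intro equalityI subsetI)
    fix \<psi> assume "\<psi> \<in> {\<psi> \<in> ?P. \<sigma> 0 (hd \<psi>) = \<sigma> (length K - 1) (last \<psi>)}"
    then have \<psi>: "\<psi> \<in> ?P" "\<sigma> 0 (hd \<psi>) = \<sigma> (length K - 1) (last \<psi>)"
      by auto
    have "\<sigma> 0 (hd \<psi>) \<in> K ! 0"
      using label_in[of 0 "hd \<psi>"] ends[OF \<psi>(1)] assms by simp
    then have j: "last \<psi> \<in> closing_labels"
      using \<psi>(2) ends[OF \<psi>(1)] by (simp add: closing_labels_def)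
    have "monodromy (last \<psi>) = hd \<psi>"
      using monodromy_unique[OF assms ends(1)[OF \<psi>(1)] j \<psi>(2)] .
    then show "\<psi> \<in> (\<Union>j\<in>closing_labels. {\<psi> \<in> ?P. hd \<psi> = monodromy j \<and> last \<psi> = j})"
      using \<psi>(1) j by auto
  next
    fix \<psi> assume "\<psi> \<in> (\<Union>j\<in>closing_labels. {\<psi> \<in> ?P. hd \<psi> = monodromy j \<and> last \<psi> = j})"
    then show "\<psi> \<in> {\<psi> \<in> ?P. \<sigma> 0 (hd \<psi>) = \<sigma> (length K - 1) (last \<psi>)}"
      using monodromy(2)[OF assms] by auto
  qed
  also have "card \<dots> =
      (\<Sum>j\<in>closing_labels. count_path_colorings (replicate (length K) {0..<m}) (monodromy j) j)"
    unfolding count_path_colorings_def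
  proof (rule card_UN_disjoint)
    show "finite closing_labels"
      by (simp add: closing_labels_def)
    show "\<forall>j\<in>closing_labels. finite {\<psi> \<in> ?P. hd \<psi> = monodromy j \<and> last \<psi> = j}"
      using finite_path_colorings[of "replicate (length K) {0..<m}"] by simp
  qed auto
  finally show ?thesis .
qed

lemma sum_count_monodromy_le:
  assumes "K \<noteq> []" "even (length K)" "2 \<le> m"
  shows "(\<Sum>j\<in>closing_labels. count_path_colorings (replicate (length K) {0..<m}) (monodromy j) j)
           \<le> (\<Sum>j\<in>{0..<m}. count_path_colorings (replicate (length K) {0..<m}) j j)
              + card moved_labels"
proof -
  let ?c = "count_path_colorings (replicate (length K) {0..<m})"
  obtain e where e: "length K = Suc e"
    using assms(1) by (cases K) auto
  then have "walks_distinct m e = walks_same m e + 1"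
    using walks_same_minus_walks_distinct[OF assms(3), of e] assms(2) by simp
  then have "?c (monodromy j) j \<le> ?c j j + (if j \<in> moved_labels then 1 else 0)"
    if "j \<in> closing_labels" for j
    using count_path_colorings_replicate monodromy(1)[OF assms(1) that] that e
    by (auto simp: moved_labels_def closing_labels_def)
  then have "(\<Sum>j\<in>closing_labels. ?c (monodromy j) j)
      \<le> (\<Sum>j\<in>closing_labels. ?c j j + (if j \<in> moved_labels then 1 else 0))"
    by (rule sum_mono)
  also have "\<dots> = (\<Sum>j\<in>closing_labels. ?c j j) + card moved_labels"
    by (simp add: sum.distrib sum.If_cases moved_labels_def closing_labels_def Int_def)
  also have "\<dots> \<le> (\<Sum>j\<in>{0..<m}. ?c j j) + card moved_labels"
    by (intro add_right_mono sum_mono2) (auto simp: closing_labels_def)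
  finally show ?thesis .
qed

lemma card_cycle_colorings_replicate_le_moved:
  assumes "K \<noteq> []" "even (length K)" "2 \<le> m"
  shows "card (cycle_colorings (replicate (length K) {0..<m}))
    \<le> card {\<psi> \<in> path_colorings (replicate (length K) {0..<m}).
                \<sigma> 0 (hd \<psi>) \<noteq> \<sigma> (length K - 1) (last \<psi>)}
      + card moved_labels"
proof -
  let ?R = "replicate (length K) {0..<m}"
  let ?Y = "{\<psi> \<in> path_colorings ?R. \<sigma> 0 (hd \<psi>) \<noteq> \<sigma> (length K - 1) (last \<psi>)}"
  let ?Q = "{\<psi> \<in> path_colorings ?R. \<sigma> 0 (hd \<psi>) = \<sigma> (length K - 1) (last \<psi>)}"
  have fin: "finite (path_colorings ?R)"
    by (rule finite_path_colorings) simp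
  have "card (path_colorings ?R) = card (?Y \<union> ?Q)"
    by (rule arg_cong[where f = card]) auto
  also have "\<dots> = card ?Y + card ?Q"
    using fin by (intro card_Un_disjoint) auto
  finally have "card (path_colorings ?R) = card ?Y + card ?Q" .
  moreover have "card (path_colorings ?R) =
      card (cycle_colorings ?R) + (\<Sum>j\<in>{0..<m}. count_path_colorings ?R j j)"
    using card_path_colorings_eq[of ?R] assms(1) by (simp add: hd_replicate)
  moreover note card_path_colorings_closing[OF assms(1)] sum_count_monodromy_le[OF assms]
  ultimately show ?thesis
    by linarith
qed

lemma moved_label_breaks:
  assumes "K \<noteq> []" "j \<in> moved_labels"
  shows "\<exists>t. Suc t < length K \<and> \<sigma> t j \<notin> K ! Suc t"
proof (rule ccontr)
  assume stable: "\<not> ?thesis"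
  have j: "j < m" "j \<in> closing_labels"
    using assms(2) by (auto simp: moved_labels_def closing_labels_def)
  have label_constant: "\<sigma> t j = \<sigma> 0 j" if "t < length K" for t
    using that
  proof (induction t)
    case (Suc t)
    then show ?case
      using label_Suc[of t j] j stable by auto
  qed simp
  have "\<sigma> 0 j = \<sigma> (length K - 1) j"
    using assms(1) by (intro label_constant[symmetric]) simp
  then have "monodromy j = j"
    by (rule monodromy_unique[OF assms(1) j])
  then show False
    using assms(2) by (simp add: moved_labels_def)
qed

lemma finite_label_lists: "finite label_lists"
  unfolding label_lists_def
  by (rule finite_subset[OF _ finite_lists_length_eq[of "{0..<m}" "length K"]]) auto

lemma ex_relabelled_cycle_coloring_repeating:
  assumes "3 \<le> length K" "3 \<le> m" "j \<in> moved_labels"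
  shows "\<exists>\<psi>\<in>label_lists. relabel \<sigma> \<psi> \<in> cycle_colorings K \<and>
           (\<exists>t. Suc t < length K \<and> \<psi> ! t = j \<and> \<psi> ! Suc t = j \<and>
                (\<forall>i. Suc i < length K \<longrightarrow> i \<noteq> t \<longrightarrow> \<psi> ! i \<noteq> \<psi> ! Suc i))"
proof -
  have K: "K \<noteq> []"
    using assms(1) by auto
  obtain t where t: "Suc t < length K" "\<sigma> t j \<notin> K ! Suc t"
    using moved_label_breaks[OF K assms(3)] by blast
  have j: "j < m"
    using assms(3) by (simp add: moved_labels_def closing_labels_def)
  have "inj_on (\<sigma> 0) {0..<m}" "inj_on (\<sigma> (length K - 1)) {0..<m}"
    using bij_betw_label K by (simp_all add: bij_betw_def)
  then obtain \<psi> where \<psi>: "length \<psi> = length K" "set \<psi> \<subseteq> {0..<m}" "\<psi> ! t = j" "\<psi> ! Suc t = j"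
    "\<forall>i. Suc i < length K \<longrightarrow> i \<noteq> t \<longrightarrow> \<psi> ! i \<noteq> \<psi> ! Suc i"
    "\<sigma> 0 (hd \<psi>) \<noteq> \<sigma> (length K - 1) (last \<psi>)"
    using ex_list_one_repetition_ends[OF assms(2,1) j t(1)] by blast
  have "\<psi> \<in> label_lists"
    using \<psi> by (simp add: label_lists_def)
  moreover from this have "relabel \<sigma> \<psi> \<in> path_colorings K"
    using \<psi>(3,5) t(2) by (intro relabel_in_path_colorings) auto
  moreover have "\<psi> \<noteq> []"
    using \<psi>(1) K by auto
  ultimately show ?thesis
    using \<psi> t(1) by (auto simp: cycle_colorings_def hd_relabel last_relabel)
qed

lemma card_moved_labels_le:
  assumes "3 \<le> length K" "3 \<le> m"
  shows "card moved_labels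
           \<le> card {\<psi> \<in> label_lists. relabel \<sigma> \<psi> \<in> cycle_colorings K \<and> \<not> distinct_adj \<psi>}"
proof -
  define W where "W j = {\<psi> \<in> label_lists. relabel \<sigma> \<psi> \<in> cycle_colorings K \<and>
    (\<exists>t. Suc t < length K \<and> \<psi> ! t = j \<and> \<psi> ! Suc t = j \<and>
         (\<forall>i. Suc i < length K \<longrightarrow> i \<noteq> t \<longrightarrow> \<psi> ! i \<noteq> \<psi> ! Suc i))}" for j
  define g where "g j = (SOME \<psi>. \<psi> \<in> W j)" for j
  have g: "g j \<in> W j" if "j \<in> moved_labels" for j
  proof -
    have "W j \<noteq> {}"
      using ex_relabelled_cycle_coloring_repeating[OF assms that] unfolding W_def by blast
    then show ?thesis
      unfolding g_def by (simp add: some_in_eq)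
  qed
  have W_disjoint: "j = j'" if \<psi>: "\<psi> \<in> W j" "\<psi> \<in> W j'" for \<psi> j j'
  proof -
    obtain t where t: "\<psi> ! t = j" "\<psi> ! Suc t = j"
      "\<forall>i. Suc i < length K \<longrightarrow> i \<noteq> t \<longrightarrow> \<psi> ! i \<noteq> \<psi> ! Suc i"
      using \<psi>(1) unfolding W_def by blast
    obtain t' where t': "Suc t' < length K" "\<psi> ! t' = j'" "\<psi> ! Suc t' = j'"
      using \<psi>(2) unfolding W_def by blast
    have "t' = t"
      using t t' by metis
    then show ?thesis
      using t t' by simp
  qed
  show ?thesis
  proof (rule card_inj_on_le)
    show "inj_on g moved_labels"
      by (intro inj_onI) (metis g W_disjoint)
    show "g ` moved_labels \<subseteq> {\<psi> \<in> label_lists. relabel \<sigma> \<psi> \<in> cycle_colorings K \<and> \<not> distinct_adj \<psi>}"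
      using g by (fastforce simp: W_def distinct_adj_conv_nth label_lists_def)
    show "finite {\<psi> \<in> label_lists. relabel \<sigma> \<psi> \<in> cycle_colorings K \<and> \<not> distinct_adj \<psi>}"
      using finite_label_lists by simp
  qed
qed

lemma card_relabelled_cycle_colorings_le:
  "card {\<psi> \<in> label_lists. relabel \<sigma> \<psi> \<in> cycle_colorings K} \<le> card (cycle_colorings K)"
proof (rule card_inj_on_le)
  show "inj_on (relabel \<sigma>) {\<psi> \<in> label_lists. relabel \<sigma> \<psi> \<in> cycle_colorings K}"
    using inj_on_relabel by (rule inj_on_subset) auto
  show "finite (cycle_colorings K)"
    using finite_path_colorings[OF finite_label_sets] by (simp add: cycle_colorings_def)
qed auto

lemma card_cycle_colorings_replicate_le:
  assumes "even (length K)" "4 \<le> length K" "3 \<le> m"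
  shows "card (cycle_colorings (replicate (length K) {0..<m})) \<le> card (cycle_colorings K)"
proof -
  let ?R = "replicate (length K) {0..<m}"
  let ?X = "{\<psi> \<in> label_lists. relabel \<sigma> \<psi> \<in> cycle_colorings K}"
  let ?Y = "{\<psi> \<in> path_colorings ?R. \<sigma> 0 (hd \<psi>) \<noteq> \<sigma> (length K - 1) (last \<psi>)}"
  let ?Z = "{\<psi> \<in> ?X. \<not> distinct_adj \<psi>}"
  have K: "K \<noteq> []"
    using assms(2) by auto
  have "?Y \<subseteq> ?X"
  proof
    fix \<psi> assume \<psi>: "\<psi> \<in> ?Y"
    then have "\<psi> \<in> label_lists" "distinct_adj \<psi>" "length \<psi> = length K" "\<psi> \<noteq> []"
      using K by (auto simp: path_colorings_replicate_iff label_lists_def)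
    moreover from this have "relabel \<sigma> \<psi> \<in> path_colorings K"
      by (intro relabel_in_path_colorings) (auto simp: distinct_adj_conv_nth)
    ultimately show "\<psi> \<in> ?X"
      using \<psi> by (auto simp: cycle_colorings_def hd_relabel last_relabel label_lists_def)
  qed
  then have "card ?Y + card ?Z = card (?Y \<union> ?Z)"
    using finite_label_lists
    by (intro card_Un_disjoint[symmetric])
      (auto intro: finite_subset simp: path_colorings_replicate_iff)
  also have "\<dots> \<le> card ?X"
    using \<open>?Y \<subseteq> ?X\<close> finite_label_lists by (intro card_mono) auto
  also have "\<dots> \<le> card (cycle_colorings K)"
    by (rule card_relabelled_cycle_colorings_le)
  finally have "card ?Y + card ?Z \<le> card (cycle_colorings K)" .
  moreover have "card (cycle_colorings ?R) \<le> card ?Y + card moved_labels"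
    using card_cycle_colorings_replicate_le_moved[OF K assms(1)] assms(3) by simp
  moreover have "card moved_labels \<le> card ?Z"
    using card_moved_labels_le assms(2,3) by simp
  ultimately show ?thesis
    by linarith
qed

end

lemma card_cycle_colorings_replicate_le_even:
  assumes "\<forall>X\<in>set K. finite X \<and> card X = m" "even (length K)" "4 \<le> length K" "3 \<le> m"
  shows "card (cycle_colorings (replicate (length K) {0..<m})) \<le> card (cycle_colorings K)"
  using coherent_labelling_exists[OF assms(1)] assms(2-4)
    coherent_labelling.card_cycle_colorings_replicate_le by blast

section \<open>The theta graph\<close>

definition theta_path :: "(nat \<times> nat \<Rightarrow> 'c) \<Rightarrow> nat \<Rightarrow> nat \<Rightarrow> 'c list" where
  "theta_path f l i = map (\<lambda>j. f (theta_pt l i j)) [0..<Suc l]"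

lemma length_theta_path [simp]: "length (theta_path f l i) = Suc l"
  by (simp add: theta_path_def)

lemma nth_theta_path [simp]: "j \<le> l \<Longrightarrow> theta_path f l i ! j = f (theta_pt l i j)"
  by (simp add: theta_path_def less_Suc_eq_le del: upt_Suc)

lemma theta_pt_0 [simp]: "theta_pt l i 0 = (0, 0)"
  by (simp add: theta_pt_def)

lemma theta_pt_end: "0 < l \<Longrightarrow> theta_pt l i l = (0, 1)"
  by (simp add: theta_pt_def)

lemma theta_path_const: "theta_path (\<lambda>_. c) l i = replicate (Suc l) c"
  by (simp add: theta_path_def map_replicate_const del: upt_Suc)

lemma theta_path_neq_Nil [simp]: "theta_path f l i \<noteq> []"
  by (simp add: theta_path_def del: upt_Suc)

lemma hd_theta_path: "hd (theta_path f l i) = f (0, 0)"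
  by (simp add: hd_conv_nth)

lemma last_theta_path: "0 < l \<Longrightarrow> last (theta_path f l i) = f (0, 1)"
  by (simp add: last_conv_nth theta_pt_end)

lemma distinct_adj_theta_path:
  "distinct_adj (theta_path f l i) \<longleftrightarrow> (\<forall>j<l. f (theta_pt l i j) \<noteq> f (theta_pt l i (Suc j)))"
  by (simp add: distinct_adj_conv_nth)

lemma theta_path_in_path_colorings_iff:
  "theta_path f l i \<in> path_colorings (theta_path L l i) \<longleftrightarrow>
     (\<forall>j\<le>l. f (theta_pt l i j) \<in> L (theta_pt l i j)) \<and> distinct_adj (theta_path f l i)"
  by (auto simp: path_colorings_iff_nth less_Suc_eq_le)

locale theta_1 =
  fixes l2 l3 :: nat
  assumes l2_pos: "0 < l2" and l3_pos: "0 < l3"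
begin

abbreviation "V \<equiv> theta_V 1 l2 l3"
abbreviation "E \<equiv> theta_E 1 l2 l3"

lemma V_eq: "V = theta_pt l2 2 ` {0..l2} \<union> theta_pt l3 3 ` {0..l3}"
proof -
  have "{0..1} = {0, 1 :: nat}"
    by auto
  then have "theta_pt 1 1 ` {0..1} = {theta_pt l2 2 0, theta_pt l2 2 l2}"
    using l2_pos by (auto simp: theta_pt_def)
  also have "\<dots> \<subseteq> theta_pt l2 2 ` {0..l2}"
    by (intro insert_subsetI empty_subsetI imageI) auto
  finally have "theta_pt 1 1 ` {0..1} \<subseteq> theta_pt l2 2 ` {0..l2}" .
  moreover have "V = theta_pt 1 1 ` {0..1} \<union> theta_pt l2 2 ` {0..l2} \<union> theta_pt l3 3 ` {0..l3}"
    by (simp add: theta_V_def theta_len_def Un_assoc)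
  ultimately show ?thesis
    by (simp add: Un_absorb1)
qed

lemma mem_V: "x \<in> V \<longleftrightarrow> (\<exists>j\<le>l2. x = theta_pt l2 2 j) \<or> (\<exists>j\<le>l3. x = theta_pt l3 3 j)"
  unfolding V_eq by (auto simp: image_iff)

lemma ball_V: "(\<forall>v\<in>V. P v) \<longleftrightarrow> (\<forall>j\<le>l2. P (theta_pt l2 2 j)) \<and> (\<forall>j\<le>l3. P (theta_pt l3 3 j))"
  unfolding V_eq by auto

lemma mem_E:
  "e \<in> E \<longleftrightarrow> e = {(0, 0), (0, 1)} \<or>
     (\<exists>j<l2. e = {theta_pt l2 2 j, theta_pt l2 2 (Suc j)}) \<or>
     (\<exists>j<l3. e = {theta_pt l3 3 j, theta_pt l3 3 (Suc j)})"
proof -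
  have "(\<lambda>j. {theta_pt 1 1 j, theta_pt 1 1 (Suc j)}) ` {0..<1} = {{(0, 0), (0, 1)}}"
    by (simp add: theta_pt_def)
  then have "E = {{(0, 0), (0, 1)}} \<union> (\<lambda>j. {theta_pt l2 2 j, theta_pt l2 2 (Suc j)}) ` {0..<l2}
      \<union> (\<lambda>j. {theta_pt l3 3 j, theta_pt l3 3 (Suc j)}) ` {0..<l3}"
    by (simp add: theta_E_def theta_len_def Un_assoc)
  then show ?thesis
    by (simp add: image_iff Bex_def)
qed

lemma proper_iff:
  "(\<forall>u w. {u, w} \<in> E \<longrightarrow> f u \<noteq> f w) \<longleftrightarrow>
     f (0, 0) \<noteq> f (0, 1) \<and> distinct_adj (theta_path f l2 2) \<and> distinct_adj (theta_path f l3 3)"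
proof
  assume proper: "\<forall>u w. {u, w} \<in> E \<longrightarrow> f u \<noteq> f w"
  have path: "f (theta_pt l i j) \<noteq> f (theta_pt l i (Suc j))"
    if "(l, i) = (l2, 2) \<or> (l, i) = (l3, 3)" "j < l" for l i j
    using that proper[rule_format, of "theta_pt l i j" "theta_pt l i (Suc j)"]
    unfolding mem_E by blast
  show "f (0, 0) \<noteq> f (0, 1) \<and> distinct_adj (theta_path f l2 2) \<and> distinct_adj (theta_path f l3 3)"
    using proper[rule_format, of "(0, 0)" "(0, 1)"] path unfolding distinct_adj_theta_path mem_E
    by simp
next
  assume "f (0, 0) \<noteq> f (0, 1) \<and> distinct_adj (theta_path f l2 2) \<and> distinct_adj (theta_path f l3 3)"
  then show "\<forall>u w. {u, w} \<in> E \<longrightarrow> f u \<noteq> f w"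
    unfolding distinct_adj_theta_path mem_E by (auto simp: doubleton_eq_iff)
qed

lemma proper_list_colorings_iff:
  "f \<in> proper_list_colorings V E L \<longleftrightarrow>
     theta_path f l3 3 \<in> cycle_colorings (theta_path L l3 3) \<and>
     theta_path f l2 2 \<in> path_colorings (theta_path L l2 2) \<and> (\<forall>v. v \<notin> V \<longrightarrow> f v = undefined)"
  unfolding proper_list_colorings_def cycle_colorings_def proper_iff ball_V
  using l3_pos by (auto simp: hd_theta_path last_theta_path theta_path_in_path_colorings_iff)

lemma theta_colorings_eqI:
  assumes "\<forall>v. v \<notin> V \<longrightarrow> f v = undefined" "\<forall>v. v \<notin> V \<longrightarrow> g v = undefined"
    and "theta_path f l2 2 = theta_path g l2 2" "theta_path f l3 3 = theta_path g l3 3"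
  shows "f = g"
proof
  fix x
  have on_path: "f (theta_pt l i j) = g (theta_pt l i j)"
    if "theta_path f l i = theta_path g l i" "j \<le> l" for l i j
    using arg_cong[OF that(1), of "\<lambda>zs. zs ! j"] that(2) by simp
  show "f x = g x"
  proof (cases "x \<in> V")
    case True
    then show ?thesis
      unfolding mem_V using on_path assms(3,4) by auto
  next
    case False
    then show ?thesis
      using assms(1,2) by metis
  qed
qed

lemma ex_theta_coloring:
  assumes z3: "z3 \<in> cycle_colorings (theta_path L l3 3)"
    and z2: "z2 \<in> path_colorings (theta_path L l2 2)"
    and ends: "hd z2 = hd z3" "last z2 = last z3"
  shows "\<exists>f\<in>proper_list_colorings V E L. theta_path f l3 3 = z3 \<and> theta_path f l2 2 = z2"
proof -
  define f where "f x = (if x \<in> V then if fst x = 2 then z2 ! snd x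
    else if x = (0, 1) then z3 ! l3 else z3 ! snd x else undefined)" for x
  have len: "length z3 = Suc l3" "length z2 = Suc l2"
    using z3 z2 by (auto simp: cycle_colorings_def dest: length_path_colorings)
  have z3_ends: "hd z3 = z3 ! 0" "last z3 = z3 ! l3"
    and z2_ends: "hd z2 = z2 ! 0" "last z2 = z2 ! l2"
    using len by (auto simp: hd_conv_nth last_conv_nth simp flip: length_greater_0_conv)
  have in_V: "theta_pt l i j \<in> V" if "(l, i) = (l2, 2) \<or> (l, i) = (l3, 3)" "j \<le> l" for l i j
    using that unfolding mem_V by auto
  have "theta_path f l3 3 ! j = z3 ! j" if "j \<le> l3" for j
    using that l3_pos in_V[of l3 3 j] by (auto simp: f_def theta_pt_def)
  then have path3: "theta_path f l3 3 = z3"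
    using len by (intro nth_equalityI) auto
  have "theta_path f l2 2 ! j = z2 ! j" if "j \<le> l2" for j
    using that l2_pos in_V[of l2 2 j] ends z3_ends z2_ends by (auto simp: f_def theta_pt_def)
  then have path2: "theta_path f l2 2 = z2"
    using len by (intro nth_equalityI) auto
  have "f \<in> proper_list_colorings V E L"
    unfolding proper_list_colorings_iff path2 path3 using z2 z3 by (simp add: f_def)
  then show ?thesis
    using path2 path3 by blast
qed

lemma num_list_colorings_eq:
  assumes "\<forall>v\<in>V. finite (L v)"
  shows "num_list_colorings V E L =
    (\<Sum>z\<in>cycle_colorings (theta_path L l3 3).
      count_path_colorings (theta_path L l2 2) (hd z) (last z))"
proof -
  define F where "F f = (theta_path f l3 3, theta_path f l2 2)" for f :: "nat \<times> nat \<Rightarrow> nat"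
  define B where
    "B z = {zs \<in> path_colorings (theta_path L l2 2). hd zs = hd z \<and> last zs = last z}" for z
  have "finite (path_colorings (theta_path L l i))" if "(l, i) = (l2, 2) \<or> (l, i) = (l3, 3)" for l i
    using that assms unfolding ball_V
    by (intro finite_path_colorings) (auto simp: in_set_conv_nth less_Suc_eq_le)
  then have fin: "finite (path_colorings (theta_path L l2 2))"
    "finite (path_colorings (theta_path L l3 3))"
    by simp_all
  have "bij_betw F (proper_list_colorings V E L) (Sigma (cycle_colorings (theta_path L l3 3)) B)"
    unfolding bij_betw_def
  proof
    \<comment> \<open>\<open>One_nat_def\<close> would rewrite \<open>theta_V 1\<close> to \<open>theta_V (Suc 0)\<close>, after which
      \<open>proper_list_colorings_iff\<close> no longer matches\<close>
    show "inj_on F (proper_list_colorings V E L)"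
      by (intro inj_onI)
        (simp add: F_def proper_list_colorings_iff theta_colorings_eqI del: One_nat_def)
    show "F ` proper_list_colorings V E L = Sigma (cycle_colorings (theta_path L l3 3)) B"
    proof (intro equalityI subsetI)
      fix w assume "w \<in> F ` proper_list_colorings V E L"
      then show "w \<in> Sigma (cycle_colorings (theta_path L l3 3)) B"
        using l2_pos l3_pos
        by (auto simp: F_def B_def proper_list_colorings_iff hd_theta_path last_theta_path
            simp del: One_nat_def)
    next
      fix w assume "w \<in> Sigma (cycle_colorings (theta_path L l3 3)) B"
      then show "w \<in> F ` proper_list_colorings V E L"
        using ex_theta_coloring unfolding F_def B_def by fastforce
    qed
  qed
  then have "num_list_colorings V E L = card (Sigma (cycle_colorings (theta_path L l3 3)) B)"
    unfolding num_list_colorings_def by (rule bij_betw_same_card)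
  also have "\<dots> = (\<Sum>z\<in>cycle_colorings (theta_path L l3 3). card (B z))"
    using fin by (intro card_SigmaI) (auto simp: cycle_colorings_def B_def)
  finally show ?thesis
    by (simp add: B_def count_path_colorings_def)
qed

lemma chrom_poly_eq:
  "chrom_poly V E m = card (cycle_colorings (replicate (Suc l3) {0..<m})) * walks_distinct m l2"
proof -
  have "chrom_poly V E m = (\<Sum>z\<in>cycle_colorings (replicate (Suc l3) {0..<m}).
      count_path_colorings (replicate (Suc l2) {0..<m}) (hd z) (last z))"
    unfolding chrom_poly_def using num_list_colorings_eq[of "\<lambda>_. {0..<m}"]
    by (simp add: theta_path_const)
  also have "\<dots> = (\<Sum>z\<in>cycle_colorings (replicate (Suc l3) {0..<m}). walks_distinct m l2)"
  proof (rule sum.cong)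
    fix z assume z: "z \<in> cycle_colorings (replicate (Suc l3) {0..<m})"
    then have "hd z < m" "last z < m" "hd z \<noteq> last z"
      using hd_last_in_path_colorings[of z "replicate (Suc l3) {0..<m}"]
      by (auto simp: cycle_colorings_def simp del: replicate_Suc)
    then show
      "count_path_colorings (replicate (Suc l2) {0..<m}) (hd z) (last z) = walks_distinct m l2"
      by (simp add: count_path_colorings_replicate del: replicate_Suc)
  qed simp
  finally show ?thesis
    by simp
qed

lemma chrom_poly_le_num_list_colorings:
  assumes "even l2" "odd l3" "1 < l3" "3 \<le> m" and L: "m_assignment V m L"
  shows "chrom_poly V E m \<le> num_list_colorings V E L"
proof -
  let ?K2 = "theta_path L l2 2" and ?K3 = "theta_path L l3 3"
  have sizes: "\<forall>X\<in>set (theta_path L l i). finite X \<and> card X = m"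
    if "(l, i) = (l2, 2) \<or> (l, i) = (l3, 3)" for l i
    using that L unfolding m_assignment_def ball_V by (auto simp: in_set_conv_nth less_Suc_eq_le)
  have "chrom_poly V E m =
      card (cycle_colorings (replicate (Suc l3) {0..<m})) * walks_distinct m l2"
    by (rule chrom_poly_eq)
  also have "\<dots> \<le> card (cycle_colorings ?K3) * walks_distinct m l2"
  proof -
    have "4 \<le> length ?K3"
      using assms(2,3) by simp presburger
    then show ?thesis
      using card_cycle_colorings_replicate_le_even[of ?K3 m] sizes[of l3 3] assms(2,4) by simp
  qed
  also have "\<dots> = (\<Sum>z\<in>cycle_colorings ?K3. walks_distinct m l2)"
    by simp
  also have "\<dots> \<le> (\<Sum>z\<in>cycle_colorings ?K3. count_path_colorings ?K2 (hd z) (last z))"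
  proof (rule sum_mono)
    fix z assume "z \<in> cycle_colorings ?K3"
    then have "hd z \<in> hd ?K2" "last z \<in> last ?K2"
      using hd_last_in_path_colorings[of z ?K3] l2_pos l3_pos
      by (auto simp: cycle_colorings_def hd_theta_path last_theta_path)
    then show "walks_distinct m l2 \<le> count_path_colorings ?K2 (hd z) (last z)"
      using walks_distinct_le_count_path_colorings[of ?K2 m l2] sizes[of l2 2] assms(1,4) by simp
  qed
  also have "\<dots> = num_list_colorings V E L"
    using num_list_colorings_eq L by (simp add: m_assignment_def)
  finally show ?thesis .
qed

end

lemma list_color_fun_eq_chrom_poly:
  assumes "\<And>L. m_assignment V m L \<Longrightarrow> chrom_poly V E m \<le> num_list_colorings V E L"
  shows "list_color_fun V E m = chrom_poly V E m"
proof -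
  have "m_assignment V m (\<lambda>_. {0..<m})"
    by (simp add: m_assignment_def)
  then have "chrom_poly V E m \<in> {num_list_colorings V E L | L. m_assignment V m L}"
    unfolding chrom_poly_def by blast
  then show ?thesis
    unfolding list_color_fun_def using assms by (intro cInf_eq_minimum) auto
qed

theorem lemma2p8:
  fixes l2 l3 :: nat
  assumes "even l2" and "l2 > 0" and "odd l3" and "l3 > 1"
  shows "enum_chrom_choosable (theta_V 1 l2 l3) (theta_E 1 l2 l3)"
proof -
  interpret theta_1 l2 l3
    using assms by unfold_locales auto
  have "chrom_poly V E m \<le> num_list_colorings V E L" if "m_assignment V m L" for m L
  proof (cases "m \<le> 2")
    case True
    then show ?thesis
      using chrom_poly_eq walks_distinct_even_eq_0 assms(1) by simp
  next
    case False
    then show ?thesis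
      using chrom_poly_le_num_list_colorings assms that by simp
  qed
  then show ?thesis
    unfolding enum_chrom_choosable_def using list_color_fun_eq_chrom_poly by blast
qed

end
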